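(* In any execution of the PermitBFT protocol, if a block is committed, then it is promised.
   Context: PermitBFT setting: $n$ nodes $v_0,\dots,v_{n-1}$, exactly $f<n/3$ byzantine (cannot forge honest signatures), the rest honest. A position is a finite set of blocks. A permit is a signed tuple $(r,p)$ with round $r$ and position $p$. A proof for $(r,p)$ is a set of $2f+1$ permits for $(r,p)$ from distinct nodes. A block is a tuple (proof, transactions) signed by the creator $v_{r\bmod n}$ of the proof's round $r$; its parents are the blocks of the proof's position $p$ (so a block can only be created from $2f+1$ permits of one round for one position). A block is committed if it has at least one child block. A block $b$ is promised (by the latest round) if in some round up to and including the latest round, at least $f+1$ honest nodes issued a permit for one and the same position containing $b$. *)

theory Defs
  imports Main "HOL-Library.FSet"
begin

text \<open>Nodes are v_0..v_{n-1}, identified with naturals below n.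
A permit is a signed tuple (r,p); we represent it as (signer, round, position).\<close>

datatype 'tx block =
  Block (bproof: "(nat \<times> nat \<times> 'tx block fset) fset") (btxs: 'tx) (bsigner: nat)

type_synonym 'tx position = "'tx block fset"
type_synonym 'tx permit = "nat \<times> nat \<times> 'tx position"

definition is_proof :: "nat \<Rightarrow> nat \<Rightarrow> 'tx permit set \<Rightarrow> nat \<Rightarrow> 'tx position \<Rightarrow> bool" where
  "is_proof n f P r p \<longleftrightarrow>
     (\<forall>x\<in>P. fst x < n \<and> snd x = (r, p)) \<and> inj_on fst P \<and> card P = 2 * f + 1"

definition valid_block :: "nat \<Rightarrow> nat \<Rightarrow> 'tx block \<Rightarrow> bool" where
  "valid_block n f b \<longleftrightarrow>
     (\<exists>r p. is_proof n f (fset (bproof b)) r p \<and> bsigner b = r mod n)"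

text \<open>Round and position of the proof of a block (well defined for valid blocks).\<close>
definition block_round :: "'tx block \<Rightarrow> nat" where
  "block_round b = fst (snd (SOME x. x \<in> fset (bproof b)))"

definition parents :: "'tx block \<Rightarrow> 'tx position" where
  "parents b = snd (snd (SOME x. x \<in> fset (bproof b)))"

text \<open>An execution (snapshot up to latest round R): byz is the set of exactly f
byzantine nodes, f < n/3; issued is the set of permits issued by honest nodes,
all in rounds up to R; blocks is the set of blocks created so far, all valid.
Honest signatures cannot be forged: every permit by an honest node appearing in
a proof of a block was actually issued by that node.\<close>
definition execution ::
  "nat \<Rightarrow> nat \<Rightarrow> nat set \<Rightarrow> nat \<Rightarrow> 'tx permit set \<Rightarrow> 'tx block set \<Rightarrow> bool" where
  "execution n f byz R issued blocks \<longleftrightarrow>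
     3 * f < n \<and> byz \<subseteq> {..<n} \<and> card byz = f \<and>
     (\<forall>x\<in>issued. fst x < n \<and> fst x \<notin> byz \<and> fst (snd x) \<le> R) \<and>
     (\<forall>c\<in>blocks. valid_block n f c) \<and>
     (\<forall>c\<in>blocks. \<forall>x\<in>fset (bproof c). fst x \<notin> byz \<longrightarrow> x \<in> issued)"

definition committed :: "'tx block set \<Rightarrow> 'tx block \<Rightarrow> bool" where
  "committed blocks b \<longleftrightarrow> (\<exists>c\<in>blocks. b |\<in>| parents c)"

definition promised ::
  "nat \<Rightarrow> nat \<Rightarrow> nat set \<Rightarrow> nat \<Rightarrow> 'tx permit set \<Rightarrow> 'tx block \<Rightarrow> bool" where
  "promised n f byz R issued b \<longleftrightarrow>
     (\<exists>r\<le>R. \<exists>p. b |\<in>| p \<and>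
        f + 1 \<le> card {v. v < n \<and> v \<notin> byz \<and> (v, r, p) \<in> issued})"

end

theory Submission
  imports Defs
begin

text \<open>The proof of a child c of b consists of 2f+1 permits for one round r and the position
p = parents c, which contains b. At most f of their signers are byzantine, so at least f+1
are honest, and since honest signatures cannot be forged these nodes really issued permits
for (r, p); in particular r is at most the latest round.\<close>

lemma parents_eq_if_is_proof:
  assumes "is_proof n f (fset (bproof c)) r p"
  shows "parents c = p"
proof -
  have "fset (bproof c) \<noteq> {}"
    using assms by (auto simp: is_proof_def)
  then have "(SOME x. x \<in> fset (bproof c)) \<in> fset (bproof c)"
    by (simp add: some_in_eq)
  then show ?thesis
    using assms by (auto simp: is_proof_def parents_def)
qed

lemma card_honest_signers_ge:
  assumes "is_proof n f P r p" and "finite byz" and "card byz = f"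
  shows "f + 1 \<le> card (fst ` P - byz)"
proof -
  have "card (fst ` P) = 2 * f + 1"
    using assms(1) by (simp add: is_proof_def card_image)
  then show ?thesis
    using diff_card_le_card_Diff[OF assms(2), of "fst ` P"] assms(3) by simp
qed

lemma honest_signers_issued:
  assumes "execution n f byz R issued blocks" and "c \<in> blocks"
    and "is_proof n f (fset (bproof c)) r p"
  shows "fst ` fset (bproof c) - byz \<subseteq> {v. v < n \<and> v \<notin> byz \<and> (v, r, p) \<in> issued}"
proof
  fix v assume "v \<in> fst ` fset (bproof c) - byz"
  then obtain x where x: "x \<in> fset (bproof c)" "v = fst x" "v \<notin> byz"
    by blast
  have "fst x < n" and "snd x = (r, p)"
    using x(1) assms(3) by (auto simp: is_proof_def)
  moreover have "x \<in> issued"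
    using x assms(1,2) unfolding execution_def by blast
  ultimately show "v \<in> {v. v < n \<and> v \<notin> byz \<and> (v, r, p) \<in> issued}"
    using x(2,3) by (cases x) simp
qed

lemma block_promises_parents:
  assumes "execution n f byz R issued blocks" and "c \<in> blocks"
  shows "\<exists>r\<le>R. f + 1 \<le> card {v. v < n \<and> v \<notin> byz \<and> (v, r, parents c) \<in> issued}"
proof -
  let ?issuers = "\<lambda>r. {v. v < n \<and> v \<notin> byz \<and> (v, r, parents c) \<in> issued}"
  obtain r p where proof_c: "is_proof n f (fset (bproof c)) r p"
    using assms unfolding execution_def valid_block_def by blast
  then have p: "p = parents c"
    by (simp add: parents_eq_if_is_proof)
  have "byz \<subseteq> {..<n}" and "card byz = f"
    using assms(1) unfolding execution_def by simp_all
  then have "f + 1 \<le> card (fst ` fset (bproof c) - byz)"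
    using proof_c card_honest_signers_ge finite_subset by blast
  also have "\<dots> \<le> card (?issuers r)"
    using honest_signers_issued[OF assms proof_c] unfolding p by (intro card_mono) auto
  finally have many: "f + 1 \<le> card (?issuers r)" .
  then have "?issuers r \<noteq> {}"
    by (intro notI) simp
  then obtain v where "(v, r, parents c) \<in> issued"
    by blast
  then have "r \<le> R"
    using assms(1) unfolding execution_def by auto
  with many show ?thesis
    by blast
qed

theorem lemma1:
  fixes blocks :: "'tx block set" and issued :: "'tx permit set"
  assumes "execution n f byz R issued blocks"
    and "committed blocks b"
  shows "promised n f byz R issued b"
proof -
  obtain c where "c \<in> blocks" and "b |\<in>| parents c"
    using assms(2) unfolding committed_def by blast
  with block_promises_parents[OF assms(1)] show ?thesis
    unfolding promised_def by blast
qed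

end
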